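(* Let $(X,d)$ be a separable metric space admitting a weak convergence, and let $p\ge 1$. If $\{\mu_n\}_{n\in\mathbb{N}}$ and $\mu$ in $\mathcal{P}_{p-1}(X)$ satisfy $\mu_n\to\mu$ in $\tau_{\mathrm{w}}^{p-1}$, then $$\max_{x_n\in M_p(\mu_n)}\min_{x\in M_p(\mu)} d(x_n,x)\to 0$$ as $n\to\infty$.
   Context: A convergence $c$ on a set $X$ is a rule assigning at most one point of $X$ as the "limit" of each sequence in $X$, such that whenever a sequence has limit $x$, every subsequence also has limit $x$. A convergence $w$ on $X$ is a weak convergence for $(X,d)$ if: (W1) whenever $\sup_n d(x_n,y)<\infty$ for some $y$, some subsequence converges in $w$ to some point of $X$; (W2) whenever $x_n\to x$ in $w$, $d(x,y)\le\liminf_n d(x_n,y)$ for all $y\in X$; (W3) whenever $x_n\to x$ in $w$ and $d(x_n,y)\to d(x,y)$ for some $y\in X$, then $d(x_n,x)\to0$. $(X,d)$ admits a weak convergence if such a $w$ exists. For $r\ge 0$, $\mathcal{P}_r(X)$ is the set of Borel probability measures $\mu$ on $(X,d)$ with $\int_X d^r(x,y)\,d\mu(y)<\infty$ for some (equivalently all) $x\in X$; $\mu_n\to\mu$ in $\tau_{\mathrm{w}}^{r}$ means $\int f\,d\mu_n\to\int f\,d\mu$ for every bounded continuous $f:(X,d)\to\mathbb{R}$ and $\int d^r(x,y)\,d\mu_n(y)\to\int d^r(x,y)\,d\mu(y)$ for all $x\in X$. For $\mu\in\mathcal{P}_{p-1}(X)$, $W_p(\mu,x,x'):=\int_X (d^p(x,y)-d^p(x',y))\,d\mu(y)$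 and $M_p(\mu):=\{x\in X: W_p(\mu,x,x')\le 0 \text{ for all } x'\in X\}$. *)

theory Defs
  imports "HOL-Probability.Probability"
begin

definition is_convergence :: "((nat \<Rightarrow> 'a) \<Rightarrow> 'a \<Rightarrow> bool) \<Rightarrow> bool" where
  "is_convergence c \<longleftrightarrow>
     (\<forall>s x y. c s x \<and> c s y \<longrightarrow> x = y) \<and>
     (\<forall>s x (r::nat \<Rightarrow> nat). c s x \<and> strict_mono r \<longrightarrow> c (s \<circ> r) x)"

text \<open>Weak convergence for the metric space (type with dist), conditions (W1)-(W3).\<close>
definition weak_conv :: "((nat \<Rightarrow> 'a::metric_space) \<Rightarrow> 'a \<Rightarrow> bool) \<Rightarrow> bool" where
  "weak_conv c \<longleftrightarrow> is_convergence c \<and>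
     (\<forall>s. (\<exists>y B. \<forall>n. dist (s n) y \<le> B) \<longrightarrow> (\<exists>(r::nat \<Rightarrow> nat) x. strict_mono r \<and> c (s \<circ> r) x)) \<and>
     (\<forall>s x y. c s x \<longrightarrow> ereal (dist x y) \<le> liminf (\<lambda>n. ereal (dist (s n) y))) \<and>
     (\<forall>s x y. c s x \<and> ((\<lambda>n. dist (s n) y) \<longlonglongrightarrow> dist x y) \<longrightarrow> ((\<lambda>n. dist (s n) x) \<longlonglongrightarrow> 0))"

definition admits_weak_convergence :: "'a::metric_space itself \<Rightarrow> bool" where
  "admits_weak_convergence _ \<longleftrightarrow> (\<exists>c::(nat \<Rightarrow> 'a) \<Rightarrow> 'a \<Rightarrow> bool. weak_conv c)"

definition separable_metric :: "'a::metric_space itself \<Rightarrow> bool" where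
  "separable_metric _ \<longleftrightarrow> (\<exists>C::'a set. countable C \<and> closure C = UNIV)"

text \<open>Power of a distance with the convention t^0 = 1 (also for t = 0).\<close>
definition dpow :: "real \<Rightarrow> real \<Rightarrow> real" where
  "dpow t r = (if r = 0 then 1 else t powr r)"

definition borel_prob :: "'a::metric_space measure \<Rightarrow> bool" where
  "borel_prob \<mu> \<longleftrightarrow> prob_space \<mu> \<and> sets \<mu> = sets borel"

definition Pr :: "real \<Rightarrow> 'a::metric_space measure set" where
  "Pr r = {\<mu>. borel_prob \<mu> \<and> (\<exists>x. integrable \<mu> (\<lambda>y. dpow (dist x y) r))}"

definition conv_tw :: "real \<Rightarrow> (nat \<Rightarrow> 'a::metric_space measure) \<Rightarrow> 'a measure \<Rightarrow> bool" where
  "conv_tw r \<mu>s \<mu> \<longleftrightarrow>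
     (\<forall>f::'a \<Rightarrow> real. continuous_on UNIV f \<and> bounded (range f) \<longrightarrow>
        ((\<lambda>n. integral\<^sup>L (\<mu>s n) f) \<longlonglongrightarrow> integral\<^sup>L \<mu> f)) \<and>
     (\<forall>x. (\<lambda>n. integral\<^sup>L (\<mu>s n) (\<lambda>y. dpow (dist x y) r))
            \<longlonglongrightarrow> integral\<^sup>L \<mu> (\<lambda>y. dpow (dist x y) r))"

definition Wp :: "real \<Rightarrow> 'a::metric_space measure \<Rightarrow> 'a \<Rightarrow> 'a \<Rightarrow> real" where
  "Wp p \<mu> x x' = integral\<^sup>L \<mu> (\<lambda>y. dpow (dist x y) p - dpow (dist x' y) p)"

definition Mp :: "real \<Rightarrow> 'a::metric_space measure \<Rightarrow> 'a set" where
  "Mp p \<mu> = {x. \<forall>x'. Wp p \<mu> x x' \<le> 0}"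

end

theory Submission
  imports Defs
begin

(* Testing tau_w^(p-1)-convergence against a continuous bump around a point a shows that
   W_p(mu_n, y, a) >= kappa d(y, a) once d(y, a) and n are large. Hence points y_n of M_p(mu_n)
   stay bounded and, by (W1), a subsequence converges weakly to some x. The lower limit
   L(z) = liminf_n d(y_n, z) is the increasing limit of the continuous functions
   inf_{k >= j} d(y_k, z), so a Fatou argument gives  int (L^p - d(x', .)^p) dmu <= 0  for all x',
   while (W2) gives d(x, .) <= L. Thus x lies in M_p(mu), and L = d(x, .) mu-a.e., hence at some
   point, where (W3) upgrades weak convergence of a further subsequence to convergence in d.
   For constant sequences this shows that M_p(mu) is nonempty and compact, so the max-min is
   attained, and the subsequence criterion gives its convergence to 0. *)

section \<open>Powers of distances\<close>

lemma dpow_nonneg: "0 \<le> dpow t r"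
  by (simp add: dpow_def)

lemma dpow_mono: "0 \<le> s \<Longrightarrow> s \<le> t \<Longrightarrow> 0 \<le> r \<Longrightarrow> dpow s r \<le> dpow t r"
  by (simp add: dpow_def powr_mono2)

lemma dpow_add_le:
  assumes "0 \<le> s" "0 \<le> t" "0 \<le> r"
  shows "dpow (s + t) r \<le> 2 powr r * (dpow s r + dpow t r)"
proof -
  have "dpow (s + t) r \<le> dpow (2 * max s t) r"
    using assms by (intro dpow_mono) auto
  also have "\<dots> = 2 powr r * dpow (max s t) r"
    using assms by (simp add: dpow_def powr_mult)
  also have "\<dots> \<le> 2 powr r * (dpow s r + dpow t r)"
    by (intro mult_left_mono) (auto simp: max_def dpow_nonneg)
  finally show ?thesis .
qed

lemma powr_diff_le_ordered:
  fixes s t p :: real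
  assumes "0 \<le> t" "t \<le> s" "1 \<le> p"
  shows "s powr p - t powr p \<le> p * (s - t) * s powr (p - 1)"
proof (cases "s = 0 \<or> p = 1")
  case True
  then show ?thesis using assms by auto
next
  case False
  then have s: "0 < s" and p: "1 < p" using assms by auto
  \<comment> \<open>Young's inequality with exponents \<open>p\<close> and \<open>p / (p - 1)\<close>\<close>
  have "t * s powr (p - 1) \<le> t powr p / p + (s powr (p - 1)) powr (p / (p - 1)) / (p / (p - 1))"
    using s p assms by (intro Youngs_inequality) (auto simp: field_simps)
  moreover have "(s powr (p - 1)) powr (p / (p - 1)) = s powr p"
    using p by (simp add: powr_powr)
  ultimately have "p * (t * s powr (p - 1)) \<le> t powr p + (p - 1) * s powr p"
    using p by (simp add: field_simps)
  moreover have "s * s powr (p - 1) = s powr p"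
    using s by (simp add: powr_mult_base)
  ultimately show ?thesis
    by (simp add: algebra_simps)
qed

lemma powr_diff_le:
  fixes s t p :: real
  assumes "0 \<le> s" "0 \<le> t" "1 \<le> p"
  shows "\<bar>s powr p - t powr p\<bar> \<le> p * \<bar>s - t\<bar> * max s t powr (p - 1)"
proof (cases "t \<le> s")
  case True
  then show ?thesis
    using assms powr_diff_le_ordered[of t s p] powr_mono2[of p t s] by (simp add: max_def)
next
  case False
  then show ?thesis
    using assms powr_diff_le_ordered[of s t p] powr_mono2[of p s t] by (simp add: max_def)
qed

lemma dpow_diff_le:
  assumes p: "1 \<le> p" and "0 \<le> s" "0 \<le> t" and b: "\<bar>s - t\<bar> \<le> b"
  shows "\<bar>dpow s p - dpow t p\<bar>
    \<le> p * b * 2 powr (p - 1) * (1 + dpow b (p - 1)) * (1 + dpow t (p - 1))"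
proof -
  have b0: "0 \<le> b" using b by linarith
  have "\<bar>dpow s p - dpow t p\<bar> \<le> p * \<bar>s - t\<bar> * max s t powr (p - 1)"
    using assms powr_diff_le[of s t p] by (simp add: dpow_def)
  also have "\<dots> \<le> p * b * dpow (t + b) (p - 1)"
    using assms b0 dpow_mono[of "max s t" "t + b" "p - 1"]
    by (intro mult_mono) (auto simp: dpow_def)
  also have "\<dots> \<le> p * b * (2 powr (p - 1) * (dpow t (p - 1) + dpow b (p - 1)))"
    using assms b0 by (intro mult_left_mono dpow_add_le) auto
  also have "\<dots> \<le> p * b * (2 powr (p - 1) * ((1 + dpow b (p - 1)) * (1 + dpow t (p - 1))))"
    using p b0 dpow_nonneg[of t "p - 1"] dpow_nonneg[of b "p - 1"]
    by (intro mult_left_mono) (auto simp: algebra_simps)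
  finally show ?thesis by (simp add: mult.assoc)
qed

lemma continuous_on_dpow:
  fixes g :: "'a::topological_space \<Rightarrow> real"
  assumes "continuous_on UNIV g" "\<And>z. 0 \<le> g z" "0 \<le> r"
  shows "continuous_on UNIV (\<lambda>z. dpow (g z) r)"
proof (cases "r = 0")
  case False
  then have "continuous_on UNIV (\<lambda>z. g z powr r)"
    using assms by (intro continuous_on_powr') auto
  then show ?thesis using False by (simp add: dpow_def)
qed (simp add: dpow_def)

lemma continuous_on_dpow_dist: "0 \<le> r \<Longrightarrow> continuous_on UNIV (\<lambda>z. dpow (dist x z) r)"
  by (intro continuous_on_dpow continuous_on_dist continuous_on_const continuous_on_id) auto

section \<open>Measures with finite moments\<close>

lemma borel_prob_measurable:
  assumes "borel_prob \<nu>" "continuous_on UNIV f"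
  shows "f \<in> borel_measurable \<nu>"
proof -
  have "sets \<nu> = sets borel"
    using assms(1) by (simp add: borel_prob_def)
  then show ?thesis
    by (subst measurable_cong_sets[OF _ refl])
      (auto intro: borel_measurable_continuous_onI[OF assms(2)])
qed

lemma borel_prob_integrable_bound:
  fixes f :: "'a::metric_space \<Rightarrow> real"
  assumes "borel_prob \<nu>" "continuous_on UNIV f" "integrable \<nu> w" "\<And>z. \<bar>f z\<bar> \<le> w z"
  shows "integrable \<nu> f"
  using assms by (intro Bochner_Integration.integrable_bound[OF assms(3) borel_prob_measurable])
    (auto intro: order_trans[OF _ abs_ge_self])

lemma Pr_borel_prob: "\<nu> \<in> Pr q \<Longrightarrow> borel_prob \<nu>"
  by (simp add: Pr_def)

lemma Pr_prob_space: "\<nu> \<in> Pr q \<Longrightarrow> prob_space \<nu>"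
  by (simp add: Pr_def borel_prob_def)

lemma Pr_integrable_dpow_dist:
  assumes "\<nu> \<in> Pr q" "0 \<le> q"
  shows "integrable \<nu> (\<lambda>z. dpow (dist x z) q)"
proof -
  obtain x0 where bp: "borel_prob \<nu>" and i0: "integrable \<nu> (\<lambda>z. dpow (dist x0 z) q)"
    using assms by (auto simp: Pr_def)
  interpret prob_space \<nu> using bp by (simp add: borel_prob_def)
  have "dpow (dist x z) q \<le> 2 powr q * (dpow (dist x0 z) q + dpow (dist x x0) q)" for z
  proof -
    have "dpow (dist x z) q \<le> dpow (dist x0 z + dist x x0) q"
      using assms dist_triangle3[of x z x0] by (intro dpow_mono) (auto simp: dist_commute)
    also have "\<dots> \<le> 2 powr q * (dpow (dist x0 z) q + dpow (dist x x0) q)"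
      using assms by (intro dpow_add_le) auto
    finally show ?thesis .
  qed
  then show ?thesis
    using i0 dpow_nonneg
    by (intro borel_prob_integrable_bound[OF bp continuous_on_dpow_dist[OF assms(2)],
        where w = "\<lambda>z. 2 powr q * (dpow (dist x0 z) q + dpow (dist x x0) q)"]) auto
qed

lemma Pr_integrable_growth:
  fixes f :: "'a::metric_space \<Rightarrow> real"
  assumes "\<nu> \<in> Pr q" "0 \<le> q" "continuous_on UNIV f" "\<And>z. \<bar>f z\<bar> \<le> C * (1 + dpow (dist x z) q)"
  shows "integrable \<nu> f"
proof -
  interpret prob_space \<nu> using Pr_prob_space[OF assms(1)] .
  show ?thesis
    using Pr_integrable_dpow_dist[OF assms(1,2)]
    by (intro borel_prob_integrable_bound[OF Pr_borel_prob[OF assms(1)] assms(3) _ assms(4)]) auto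
qed

lemma integrable_Wp_integrand:
  assumes p: "1 \<le> p" and \<nu>: "\<nu> \<in> Pr (p - 1)"
  shows "integrable \<nu> (\<lambda>z. dpow (dist x z) p - dpow (dist x' z) p)"
proof (rule Pr_integrable_growth[OF \<nu>])
  show "continuous_on UNIV (\<lambda>z. dpow (dist x z) p - dpow (dist x' z) p)"
    using p by (intro continuous_on_diff continuous_on_dpow_dist) auto
  show "\<bar>dpow (dist x z) p - dpow (dist x' z) p\<bar>
    \<le> p * dist x x' * 2 powr (p - 1) * (1 + dpow (dist x x') (p - 1))
      * (1 + dpow (dist x' z) (p - 1))"
    for z using abs_dist_diff_le[of x z x'] by (intro dpow_diff_le[OF p]) (auto simp: dist_commute)
qed (use p in simp)

lemma Wp_diff:
  assumes p: "1 \<le> p" and P: "\<nu> \<in> Pr (p - 1)"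
  shows "Wp p \<nu> x x' = Wp p \<nu> x a - Wp p \<nu> x' a"
  unfolding Wp_def
  by (simp add: Bochner_Integration.integral_diff[symmetric,
        OF integrable_Wp_integrand[OF p P] integrable_Wp_integrand[OF p P]])

lemma Wp_swap:
  assumes p: "1 \<le> p" and P: "\<nu> \<in> Pr (p - 1)"
  shows "Wp p \<nu> x x' = - Wp p \<nu> x' x"
  using Wp_diff[OF p P, of x x' x] by (simp add: Wp_def)

section \<open>Integrals of functions of polynomial growth\<close>

lemma integral_nonneg_lower_semicont:
  fixes M :: "nat \<Rightarrow> 'a::metric_space measure" and g :: "'a \<Rightarrow> real"
  assumes bc: "\<And>f::'a \<Rightarrow> real. continuous_on UNIV f \<Longrightarrow> bounded (range f) \<Longrightarrow>
      (\<lambda>n. integral\<^sup>L (M n) f) \<longlonglongrightarrow> integral\<^sup>L M0 f"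
    and P: "\<And>n. borel_prob (M n)" "borel_prob M0"
    and g: "continuous_on UNIV g" "\<And>z. 0 \<le> g z"
    and gi: "\<And>n. integrable (M n) g" "integrable M0 g"
    and a: "a < integral\<^sup>L M0 g"
  shows "eventually (\<lambda>n. a < integral\<^sup>L (M n) g) sequentially"
proof -
  define g' where "g' m z = min (g z) (real m)" for m :: nat and z
  have g'c: "continuous_on UNIV (g' m)" for m
    unfolding g'_def by (intro continuous_intros g)
  have g'i: "integrable \<nu> (g' m)" if "borel_prob \<nu>" "integrable \<nu> g" for \<nu> m
    using g that by (intro borel_prob_integrable_bound[OF that(1) g'c that(2)]) (auto simp: g'_def)
  have "(\<lambda>m. integral\<^sup>L M0 (g' m)) \<longlonglongrightarrow> integral\<^sup>L M0 g"
  proof (rule integral_dominated_convergence[where w = g])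
    show "AE z in M0. (\<lambda>m. g' m z) \<longlonglongrightarrow> g z"
    proof (intro AE_I2 tendsto_eventually)
      fix z
      obtain N where N: "g z \<le> real N" using real_arch_simple by blast
      have "g z \<le> real m" if "N \<le> m" for m
        using N that by (meson of_nat_le_iff order_trans)
      then show "eventually (\<lambda>m. g' m z = g z) sequentially"
        unfolding eventually_sequentially g'_def by (auto intro!: exI[of _ N] min.absorb1)
    qed
    show "g' m \<in> borel_measurable M0" for m
      by (rule borel_prob_measurable[OF P(2) g'c])
  qed (use g gi borel_prob_measurable[OF P(2)] in \<open>auto simp: g'_def\<close>)
  then obtain m where m: "a < integral\<^sup>L M0 (g' m)"
    using eventually_happens'[OF sequentially_bot order_tendstoD(1)[OF _ a]] by blast
  have "(\<lambda>n. integral\<^sup>L (M n) (g' m)) \<longlonglongrightarrow> integral\<^sup>L M0 (g' m)"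
    using g by (intro bc g'c bounded_subset[OF bounded_closed_interval[of 0 "real m"]])
      (auto simp: g'_def)
  then have "eventually (\<lambda>n. a < integral\<^sup>L (M n) (g' m)) sequentially"
    using m order_tendstoD(1) by blast
  then show ?thesis
  proof (rule eventually_mono)
    fix n assume "a < integral\<^sup>L (M n) (g' m)"
    also have "\<dots> \<le> integral\<^sup>L (M n) g"
      using P gi by (intro integral_mono g'i) (auto simp: g'_def)
    finally show "a < integral\<^sup>L (M n) g" .
  qed
qed

lemma integral_tendsto_if_dominated:
  fixes M :: "nat \<Rightarrow> 'a::metric_space measure" and f H :: "'a \<Rightarrow> real"
  assumes bc: "\<And>f::'a \<Rightarrow> real. continuous_on UNIV f \<Longrightarrow> bounded (range f) \<Longrightarrow>
      (\<lambda>n. integral\<^sup>L (M n) f) \<longlonglongrightarrow> integral\<^sup>L M0 f"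
    and P: "\<And>n. borel_prob (M n)" "borel_prob M0"
    and H: "continuous_on UNIV H" "\<And>z. 0 \<le> H z"
    and Hi: "\<And>n. integrable (M n) H" "integrable M0 H"
    and HL: "(\<lambda>n. integral\<^sup>L (M n) H) \<longlonglongrightarrow> integral\<^sup>L M0 H"
    and f: "continuous_on UNIV f" "\<And>z. \<bar>f z\<bar> \<le> C * H z"
  shows "(\<lambda>n. integral\<^sup>L (M n) f) \<longlonglongrightarrow> integral\<^sup>L M0 f"
proof -
  \<comment> \<open>Lower semicontinuity for the nonnegative \<open>C H + h\<close>, minus the convergent \<open>C H\<close> part.\<close>
  have lower: "eventually (\<lambda>n. a < integral\<^sup>L (M n) h) sequentially"
    if h: "continuous_on UNIV h" "\<And>z. \<bar>h z\<bar> \<le> C * H z" and a: "a < integral\<^sup>L M0 h" for h a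
  proof -
    define g where "g z = C * H z + h z" for z
    have hi: "integrable \<nu> h" if "borel_prob \<nu>" "integrable \<nu> H" for \<nu>
      using that h by (intro borel_prob_integrable_bound[of \<nu> h "\<lambda>z. C * H z"]) auto
    have gi: "integrable \<nu> g" if "borel_prob \<nu>" "integrable \<nu> H" for \<nu>
      unfolding g_def using that hi by auto
    have gint: "integral\<^sup>L \<nu> g = C * integral\<^sup>L \<nu> H + integral\<^sup>L \<nu> h"
      if "borel_prob \<nu>" "integrable \<nu> H" for \<nu>
      unfolding g_def using that hi by simp
    define \<delta> where "\<delta> = integral\<^sup>L M0 h - a"
    have \<delta>: "0 < \<delta>" using a by (simp add: \<delta>_def)
    have "continuous_on UNIV g"
      unfolding g_def by (intro continuous_on_add continuous_on_mult_left H(1) h(1))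
    moreover have "0 \<le> g z" for z
      using h(2)[of z] by (simp add: g_def abs_le_iff)
    ultimately have "eventually (\<lambda>n. integral\<^sup>L M0 g - \<delta> / 2 < integral\<^sup>L (M n) g) sequentially"
      using \<delta> by (intro integral_nonneg_lower_semicont[OF bc P] gi Hi P) auto
    moreover have
      "eventually (\<lambda>n. C * integral\<^sup>L (M n) H < C * integral\<^sup>L M0 H + \<delta> / 2) sequentially"
      using \<delta> by (intro order_tendstoD(2)[OF tendsto_mult_left[OF HL]]) simp
    ultimately show ?thesis
      unfolding gint[OF P(1) Hi(1)] gint[OF P(2) Hi(2)] \<delta>_def by eventually_elim argo
  qed
  show ?thesis
  proof (rule order_tendstoI)
    show "eventually (\<lambda>n. a < integral\<^sup>L (M n) f) sequentially" if "a < integral\<^sup>L M0 f" for a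
      using lower[OF f that] .
    show "eventually (\<lambda>n. integral\<^sup>L (M n) f < a) sequentially" if "integral\<^sup>L M0 f < a" for a
      using lower[of "\<lambda>z. - f z" "- a"] f that by (auto intro: continuous_intros)
  qed
qed

lemma Pr_integral_one_plus:
  assumes "\<nu> \<in> Pr q" "0 \<le> q"
  shows "integral\<^sup>L \<nu> (\<lambda>z. 1 + dpow (dist x z) q) = 1 + integral\<^sup>L \<nu> (\<lambda>z. dpow (dist x z) q)"
proof -
  interpret prob_space \<nu> using Pr_prob_space[OF assms(1)] .
  show ?thesis using Pr_integrable_dpow_dist[OF assms] by (simp add: prob_space)
qed

lemma conv_tw_integral_tendsto:
  fixes f :: "'a::metric_space \<Rightarrow> real"
  assumes q: "0 \<le> q" and conv: "conv_tw q \<mu>s \<mu>" and Pn: "\<And>n. \<mu>s n \<in> Pr q" and P: "\<mu> \<in> Pr q"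
    and f: "continuous_on UNIV f" "\<And>z. \<bar>f z\<bar> \<le> C * (1 + dpow (dist x z) q)"
  shows "(\<lambda>n. integral\<^sup>L (\<mu>s n) f) \<longlonglongrightarrow> integral\<^sup>L \<mu> f"
proof (rule integral_tendsto_if_dominated[where H = "\<lambda>z. 1 + dpow (dist x z) q"])
  show "continuous_on UNIV (\<lambda>z. 1 + dpow (dist x z) q)"
    by (intro continuous_intros continuous_on_dpow_dist q)
  have "integrable \<nu> (\<lambda>z. 1 + dpow (dist x z) q)" if "\<nu> \<in> Pr q" for \<nu>
  proof -
    interpret prob_space \<nu> using Pr_prob_space[OF that] .
    show ?thesis using Pr_integrable_dpow_dist[OF that q] by simp
  qed
  then show "integrable (\<mu>s n) (\<lambda>z. 1 + dpow (dist x z) q)"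
    and "integrable \<mu> (\<lambda>z. 1 + dpow (dist x z) q)" for n
    using Pn P by auto
  show "(\<lambda>n. integral\<^sup>L (\<mu>s n) (\<lambda>z. 1 + dpow (dist x z) q))
    \<longlonglongrightarrow> integral\<^sup>L \<mu> (\<lambda>z. 1 + dpow (dist x z) q)"
    using conv unfolding conv_tw_def Pr_integral_one_plus[OF Pn q] Pr_integral_one_plus[OF P q]
    by (auto intro: tendsto_add)
qed (use conv Pn P f dpow_nonneg in \<open>auto simp: conv_tw_def add_nonneg_nonneg intro: Pr_borel_prob\<close>)

section \<open>Lower limits of distances\<close>

definition tail_inf_dist :: "(nat \<Rightarrow> 'a::metric_space) \<Rightarrow> nat \<Rightarrow> 'a \<Rightarrow> real" where
  "tail_inf_dist y k z = (INF n\<in>{k..}. dist (y n) z)"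

definition liminf_dist :: "(nat \<Rightarrow> 'a::metric_space) \<Rightarrow> 'a \<Rightarrow> real" where
  "liminf_dist y z = (SUP k. tail_inf_dist y k z)"

lemma bdd_below_dist_image: "bdd_below ((\<lambda>n. dist (y n) z) ` A)"
  by (rule bdd_belowI[of _ 0]) auto

lemma tail_inf_dist_le: "k \<le> n \<Longrightarrow> tail_inf_dist y k z \<le> dist (y n) z"
  unfolding tail_inf_dist_def by (rule cINF_lower[OF bdd_below_dist_image]) auto

lemma tail_inf_dist_greatest: "(\<And>n. k \<le> n \<Longrightarrow> c \<le> dist (y n) z) \<Longrightarrow> c \<le> tail_inf_dist y k z"
  unfolding tail_inf_dist_def by (rule cINF_greatest) auto

lemma tail_inf_dist_nonneg: "0 \<le> tail_inf_dist y k z"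
  by (rule tail_inf_dist_greatest) auto

lemma incseq_tail_inf_dist: "incseq (\<lambda>k. tail_inf_dist y k z)"
  unfolding incseq_def tail_inf_dist_def
  by (intro allI impI cINF_superset_mono[OF _ bdd_below_dist_image]) auto

lemma continuous_on_tail_inf_dist: "continuous_on UNIV (tail_inf_dist y k)"
proof (rule lipschitz_on_continuous_on[OF lipschitz_onI[where L = 1]])
  have "tail_inf_dist y k z \<le> tail_inf_dist y k z' + dist z z'" for z z'
  proof -
    have "tail_inf_dist y k z - dist z z' \<le> tail_inf_dist y k z'"
    proof (rule tail_inf_dist_greatest)
      fix n assume "k \<le> n"
      then have "tail_inf_dist y k z \<le> dist (y n) z" by (rule tail_inf_dist_le)
      also have "\<dots> \<le> dist (y n) z' + dist z z'" by (metis dist_commute dist_triangle)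
      finally show "tail_inf_dist y k z - dist z z' \<le> dist (y n) z'" by simp
    qed
    then show ?thesis by simp
  qed
  then show "dist (tail_inf_dist y k z) (tail_inf_dist y k z') \<le> 1 * dist z z'" for z z'
    by (smt (verit, best) dist_commute dist_real_def)
qed simp

context
  fixes y :: "nat \<Rightarrow> 'a::metric_space" and x' :: 'a and b :: real
  assumes bounded_seq: "\<And>n. dist (y n) x' \<le> b"
begin

lemma tail_inf_dist_near: "\<bar>tail_inf_dist y k z - dist x' z\<bar> \<le> b"
proof -
  have near: "\<bar>dist (y n) z - dist x' z\<bar> \<le> b" for n
    using abs_dist_diff_le[of "y n" z x'] bounded_seq[of n] by (simp add: dist_commute)
  have "dist x' z - b \<le> dist (y n) z" for n
    using near[of n] by (simp add: abs_le_iff)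
  then have "dist x' z - b \<le> tail_inf_dist y k z"
    by (rule tail_inf_dist_greatest)
  moreover have "tail_inf_dist y k z \<le> dist (y k) z" by (rule tail_inf_dist_le) simp
  ultimately show ?thesis using near[of k] by (simp add: abs_le_iff)
qed

lemma tail_inf_dist_le_bound: "tail_inf_dist y k z \<le> dist x' z + b"
  using tail_inf_dist_near[of k z] by (simp add: abs_le_iff)

lemma tail_inf_dist_tendsto: "(\<lambda>k. tail_inf_dist y k z) \<longlonglongrightarrow> liminf_dist y z"
  unfolding liminf_dist_def
  by (intro LIMSEQ_incseq_SUP[OF _ incseq_tail_inf_dist] bdd_aboveI[of _ "dist x' z + b"])
    (auto intro: tail_inf_dist_le_bound)

lemma ereal_liminf_dist: "ereal (liminf_dist y z) = liminf (\<lambda>n. ereal (dist (y n) z))"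
proof -
  have "ereal (tail_inf_dist y k z) = (INF n\<in>{k..}. ereal (dist (y n) z))" for k
    unfolding tail_inf_dist_def
  proof (rule ereal_INF)
    have "0 \<le> (INF n\<in>{k..}. ereal (dist (y n) z))"
      by (rule INF_greatest) simp
    moreover have "(INF n\<in>{k..}. ereal (dist (y n) z)) \<le> ereal (dist (y k) z)"
      by (rule INF_lower) simp
    ultimately show "\<bar>INF n\<in>{k..}. ereal (dist (y n) z)\<bar> \<noteq> \<infinity>" by auto
  qed
  moreover have "ereal (liminf_dist y z) = (SUP k. ereal (tail_inf_dist y k z))"
    unfolding liminf_dist_def
  proof (rule ereal_SUP)
    have "(SUP k. ereal (tail_inf_dist y k z)) \<le> ereal (dist x' z + b)"
      by (intro SUP_least) (simp add: tail_inf_dist_le_bound)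
    moreover have "ereal (tail_inf_dist y 0 z) \<le> (SUP k. ereal (tail_inf_dist y k z))"
      by (rule SUP_upper) simp
    ultimately show "\<bar>SUP k. ereal (tail_inf_dist y k z)\<bar> \<noteq> \<infinity>" by auto
  qed
  ultimately show ?thesis by (simp add: liminf_SUP_INF)
qed

end

lemma weak_conv_subseq: "weak_conv c \<Longrightarrow> c s x \<Longrightarrow> strict_mono r \<Longrightarrow> c (s \<circ> r) x"
  by (simp add: weak_conv_def is_convergence_def)

lemma weak_conv_bounded_subseq:
  fixes s :: "nat \<Rightarrow> 'a::metric_space"
  assumes "weak_conv c" "\<And>n. dist (s n) y \<le> B"
  shows "\<exists>r x. strict_mono r \<and> c (s \<circ> r) x"
  using assms unfolding weak_conv_def by blast

lemma weak_conv_dist_le_liminf_dist: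
  assumes "weak_conv c" "c y x" "\<And>n. dist (y n) x' \<le> b"
  shows "dist x z \<le> liminf_dist y z"
proof -
  have "ereal (dist x z) \<le> liminf (\<lambda>n. ereal (dist (y n) z))"
    using assms(1,2) by (simp add: weak_conv_def)
  then show ?thesis by (simp flip: ereal_liminf_dist[OF assms(3)])
qed

lemma weak_conv_strong_subseq:
  assumes wc: "weak_conv c" and cy: "c y x" and yb: "\<And>n. dist (y n) x' \<le> b"
    and z: "liminf_dist y z = dist x z"
  shows "\<exists>r. strict_mono r \<and> (y \<circ> r) \<longlonglongrightarrow> x"
proof -
  obtain r where r: "strict_mono r"
    and "((\<lambda>n. ereal (dist (y n) z)) \<circ> r) \<longlonglongrightarrow> liminf (\<lambda>n. ereal (dist (y n) z))"
    using liminf_subseq_lim by blast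
  then have "(\<lambda>n. dist ((y \<circ> r) n) z) \<longlonglongrightarrow> dist x z"
    by (simp add: o_def flip: ereal_liminf_dist[OF yb] z)
  moreover have "c (y \<circ> r) x" by (rule weak_conv_subseq[OF wc cy r])
  ultimately have "(\<lambda>n. dist ((y \<circ> r) n) x) \<longlonglongrightarrow> 0"
    using wc unfolding weak_conv_def by blast
  then show ?thesis
    using r tendsto_dist_iff[of "y \<circ> r" x sequentially] by blast
qed

section \<open>Lower semicontinuity of \<open>W\<^sub>p\<close> along weak limits\<close>

lemma conv_tw_subseq:
  assumes "conv_tw q \<mu>s \<mu>" "strict_mono r"
  shows "conv_tw q (\<mu>s \<circ> r) \<mu>"
proof -
  have "(\<lambda>n. X (r n)) \<longlonglongrightarrow> L" if "X \<longlonglongrightarrow> L" for X :: "nat \<Rightarrow> real" and L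
    using LIMSEQ_subseq_LIMSEQ[OF that assms(2)] by (simp add: o_def)
  then show ?thesis
    using assms(1) by (auto simp: conv_tw_def)
qed

lemma conv_tw_const: "conv_tw q (\<lambda>n. \<nu>) \<nu>"
  by (simp add: conv_tw_def)

lemma continuous_on_dpow_tail_inf_dist:
  "1 \<le> p \<Longrightarrow> continuous_on UNIV (\<lambda>z. dpow (tail_inf_dist y k z) p - dpow (dist x' z) p)"
  by (intro continuous_on_diff continuous_on_dpow_dist
      continuous_on_dpow[OF continuous_on_tail_inf_dist tail_inf_dist_nonneg]) auto

lemma integral_dpow_tail_inf_dist_le:
  fixes y :: "nat \<Rightarrow> 'a::metric_space"
  assumes p: "1 \<le> p" and conv: "conv_tw (p - 1) \<mu>s \<mu>"
    and Pn: "\<And>n. \<mu>s n \<in> Pr (p - 1)" and P: "\<mu> \<in> Pr (p - 1)"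
    and yb: "\<And>n. dist (y n) x' \<le> b"
    and Wa: "\<And>n. Wp p (\<mu>s n) (y n) x' \<le> a n" and al: "a \<longlonglongrightarrow> a0"
  shows "integral\<^sup>L \<mu> (\<lambda>z. dpow (tail_inf_dist y k z) p - dpow (dist x' z) p) \<le> a0"
proof (rule LIMSEQ_le[OF _ al])
  have q: "0 \<le> p - 1" using p by simp
  define f where "f z = dpow (tail_inf_dist y k z) p - dpow (dist x' z) p" for z
  define K where "K = p * b * 2 powr (p - 1) * (1 + dpow b (p - 1))"
  have f_cont: "continuous_on UNIV f"
    unfolding f_def by (rule continuous_on_dpow_tail_inf_dist[OF p])
  have f_bound: "\<bar>f z\<bar> \<le> K * (1 + dpow (dist x' z) (p - 1))" for z
    unfolding f_def K_def
    by (rule dpow_diff_le[OF p tail_inf_dist_nonneg zero_le_dist tail_inf_dist_near[OF yb]])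
  show "(\<lambda>n. integral\<^sup>L (\<mu>s n) f) \<longlonglongrightarrow> integral\<^sup>L \<mu> f"
    by (rule conv_tw_integral_tendsto[OF q conv Pn P f_cont f_bound])
  have "integral\<^sup>L (\<mu>s n) f \<le> a n" if "k \<le> n" for n
  proof -
    have "dpow (tail_inf_dist y k z) p \<le> dpow (dist (y n) z) p" for z
      using p that by (intro dpow_mono tail_inf_dist_nonneg tail_inf_dist_le) auto
    then have "integral\<^sup>L (\<mu>s n) f \<le> Wp p (\<mu>s n) (y n) x'"
      unfolding Wp_def f_def using p
      by (intro integral_mono integrable_Wp_integrand[OF p Pn]
          Pr_integrable_growth[OF Pn q f_cont[unfolded f_def] f_bound[unfolded f_def]]) auto
    then show ?thesis using Wa[of n] by linarith
  qed
  then show "\<exists>N. \<forall>n\<ge>N. integral\<^sup>L (\<mu>s n) f \<le> a n" by blast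
qed

lemma integral_dpow_liminf_dist_le:
  fixes y :: "nat \<Rightarrow> 'a::metric_space"
  assumes p: "1 \<le> p" and conv: "conv_tw (p - 1) \<mu>s \<mu>"
    and Pn: "\<And>n. \<mu>s n \<in> Pr (p - 1)" and P: "\<mu> \<in> Pr (p - 1)"
    and yb: "\<And>n. dist (y n) x' \<le> b"
    and Wa: "\<And>n. Wp p (\<mu>s n) (y n) x' \<le> a n" and al: "a \<longlonglongrightarrow> a0"
  shows "integrable \<mu> (\<lambda>z. dpow (liminf_dist y z) p - dpow (dist x' z) p)"
    and "integral\<^sup>L \<mu> (\<lambda>z. dpow (liminf_dist y z) p - dpow (dist x' z) p) \<le> a0"
proof -
  have q: "0 \<le> p - 1" using p by simp
  define f where "f k z = dpow (tail_inf_dist y k z) p - dpow (dist x' z) p" for k z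
  define g where "g z = dpow (liminf_dist y z) p - dpow (dist x' z) p" for z
  define K where "K = p * b * 2 powr (p - 1) * (1 + dpow b (p - 1))"
  have f_bound: "\<bar>f k z\<bar> \<le> K * (1 + dpow (dist x' z) (p - 1))" for k z
    unfolding f_def K_def
    by (rule dpow_diff_le[OF p tail_inf_dist_nonneg zero_le_dist tail_inf_dist_near[OF yb]])
  have f_tendsto: "(\<lambda>k. f k z) \<longlonglongrightarrow> g z" for z
  proof -
    have "(\<lambda>k. tail_inf_dist y k z powr p) \<longlonglongrightarrow> liminf_dist y z powr p"
      using p by (intro tendsto_powr'[OF tail_inf_dist_tendsto[OF yb]])
        (auto simp: tail_inf_dist_nonneg)
    then show ?thesis unfolding f_def g_def using p by (auto simp: dpow_def intro: tendsto_diff)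
  qed
  have f_meas: "\<And>k. f k \<in> borel_measurable \<mu>"
    unfolding f_def
    by (rule borel_prob_measurable[OF Pr_borel_prob[OF P] continuous_on_dpow_tail_inf_dist[OF p]])
  have g_meas: "g \<in> borel_measurable \<mu>"
    by (rule borel_measurable_LIMSEQ_real[OF f_tendsto f_meas])
  have dominated: "integrable \<mu> (\<lambda>z. K * (1 + dpow (dist x' z) (p - 1)))"
  proof -
    interpret prob_space \<mu> using Pr_prob_space[OF P] .
    show ?thesis using Pr_integrable_dpow_dist[OF P q] by simp
  qed
  note dominated_convergence = integrable_dominated_convergence[where s = f, OF g_meas f_meas dominated]
    integral_dominated_convergence[where s = f, OF g_meas f_meas dominated]
  show "integrable \<mu> (\<lambda>z. dpow (liminf_dist y z) p - dpow (dist x' z) p)"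
    using dominated_convergence(1) f_tendsto f_bound by (auto simp: g_def[abs_def])
  have "(\<lambda>k. integral\<^sup>L \<mu> (f k)) \<longlonglongrightarrow> integral\<^sup>L \<mu> g"
    using dominated_convergence(2) f_tendsto f_bound by auto
  then have "integral\<^sup>L \<mu> g \<le> a0"
    unfolding f_def by (rule LIMSEQ_le_const2)
      (use integral_dpow_tail_inf_dist_le[OF p conv Pn P yb Wa al] in auto)
  then show "integral\<^sup>L \<mu> (\<lambda>z. dpow (liminf_dist y z) p - dpow (dist x' z) p) \<le> a0"
    by (simp add: g_def[abs_def])
qed

lemma Wp_le_dpow_liminf_dist:
  assumes p: "1 \<le> p" and P: "\<mu> \<in> Pr (p - 1)"
    and int: "integrable \<mu> (\<lambda>z. dpow (liminf_dist y z) p - dpow (dist x' z) p)"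
    and le: "\<And>z. dist x z \<le> liminf_dist y z"
  shows "Wp p \<mu> x x' \<le> integral\<^sup>L \<mu> (\<lambda>z. dpow (liminf_dist y z) p - dpow (dist x' z) p)"
  unfolding Wp_def using p le
  by (intro integral_mono[OF integrable_Wp_integrand[OF p P] int]) (auto intro: dpow_mono)

lemma Wp_weak_limit_le:
  fixes y :: "nat \<Rightarrow> 'a::metric_space"
  assumes p: "1 \<le> p" and conv: "conv_tw (p - 1) \<mu>s \<mu>"
    and Pn: "\<And>n. \<mu>s n \<in> Pr (p - 1)" and P: "\<mu> \<in> Pr (p - 1)"
    and wc: "weak_conv c" and cy: "c y x" and yb: "\<And>n. dist (y n) x' \<le> b"
    and Wa: "\<And>n. Wp p (\<mu>s n) (y n) x' \<le> a n" and al: "a \<longlonglongrightarrow> a0"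
  shows "Wp p \<mu> x x' \<le> a0"
proof -
  note lim = integral_dpow_liminf_dist_le[OF p conv Pn P yb Wa al]
  have "Wp p \<mu> x x' \<le> integral\<^sup>L \<mu> (\<lambda>z. dpow (liminf_dist y z) p - dpow (dist x' z) p)"
    by (rule Wp_le_dpow_liminf_dist[OF p P lim(1) weak_conv_dist_le_liminf_dist[OF wc cy yb]])
  with lim(2) show ?thesis by linarith
qed

lemma weak_limit_strong_subseq_if_Wp_le:
  fixes y :: "nat \<Rightarrow> 'a::metric_space"
  assumes p: "1 \<le> p" and conv: "conv_tw (p - 1) \<mu>s \<mu>"
    and Pn: "\<And>n. \<mu>s n \<in> Pr (p - 1)" and P: "\<mu> \<in> Pr (p - 1)"
    and wc: "weak_conv c" and cy: "c y x" and yb: "\<And>n. dist (y n) x \<le> b"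
    and Wa: "\<And>n. Wp p (\<mu>s n) (y n) x \<le> 0"
  shows "\<exists>r. strict_mono r \<and> (y \<circ> r) \<longlonglongrightarrow> x"
proof -
  define h where "h z = dpow (liminf_dist y z) p - dpow (dist x z) p" for z
  have le: "dist x z \<le> liminf_dist y z" for z
    by (rule weak_conv_dist_le_liminf_dist[OF wc cy yb])
  have h_nonneg: "0 \<le> h z" for z
    using p le[of z] dpow_mono[of "dist x z" "liminf_dist y z" p] by (simp add: h_def)
  have h_int: "integrable \<mu> h" and "integral\<^sup>L \<mu> h \<le> 0"
    using integral_dpow_liminf_dist_le[OF p conv Pn P yb Wa tendsto_const]
    by (simp_all add: h_def[abs_def])
  \<comment> \<open>\<open>h \<ge> 0\<close> has integral \<open>\<le> 0\<close>, so it vanishes a.e., in particular somewhere.\<close>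
  moreover have "0 \<le> integral\<^sup>L \<mu> h"
    by (intro integral_nonneg_AE) (simp add: h_nonneg)
  ultimately have "integral\<^sup>L \<mu> h = 0"
    by simp
  then have AE_zero: "AE z in \<mu>. h z = 0"
    using integral_nonneg_eq_0_iff_AE[OF h_int] h_nonneg by simp
  obtain z where "h z = 0"
    using eventually_happens'[OF prob_space.ae_filter_bot[OF Pr_prob_space[OF P]] AE_zero] by blast
  then have "\<not> dist x z < liminf_dist y z"
    using p powr_less_mono2[of p "dist x z" "liminf_dist y z"] by (auto simp: h_def dpow_def)
  then have "liminf_dist y z = dist x z"
    using le[of z] by simp
  then show ?thesis
    by (rule weak_conv_strong_subseq[OF wc cy yb])
qed

section \<open>Coercivity of \<open>W\<^sub>p\<close>\<close>

lemma powr_diff_ge_near: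
  fixes a e D p :: real
  assumes p: "1 \<le> p" and "0 \<le> a" "3 * a \<le> D" "D - a \<le> e" "1 \<le> D"
  shows "D / 3 powr p \<le> e powr p - a powr p"
proof -
  have "2 * (D / 3) powr p \<le> 2 powr p * (D / 3) powr p"
    using powr_mono[of 1 p 2] p by (intro mult_right_mono) auto
  also have "\<dots> = (2 * (D / 3)) powr p"
    using assms powr_mult[of 2 "D / 3" p] by simp
  also have "\<dots> \<le> e powr p"
    using assms by (intro powr_mono2) auto
  finally have "(D / 3) powr p \<le> e powr p - a powr p"
    using powr_mono2[of p a "D / 3"] assms by linarith
  moreover have "D / 3 powr p \<le> (D / 3) powr p"
    using powr_mono[of 1 p D] assms by (simp add: powr_divide divide_right_mono)
  ultimately show ?thesis by linarith
qed

lemma powr_diff_ge_far: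
  fixes a e D p :: real
  assumes p: "1 \<le> p" and "0 \<le> e" "\<bar>e - a\<bar> \<le> D" "D \<le> 3 * a"
  shows "- (p * D * 4 powr (p - 1) * dpow a (p - 1)) \<le> e powr p - a powr p"
proof -
  have a: "0 \<le> a" "0 \<le> D" using assms by auto
  have "\<bar>e powr p - a powr p\<bar> \<le> p * \<bar>e - a\<bar> * max e a powr (p - 1)"
    using assms a by (intro powr_diff_le) auto
  also have "\<dots> \<le> p * D * dpow (4 * a) (p - 1)"
    using assms a dpow_mono[of "max e a" "4 * a" "p - 1"]
    by (intro mult_mono) (auto simp: dpow_def abs_le_iff)
  also have "\<dots> = p * D * 4 powr (p - 1) * dpow a (p - 1)"
    using a by (simp add: dpow_def powr_mult)
  finally show ?thesis by linarith
qed

definition bump :: "'a::metric_space \<Rightarrow> nat \<Rightarrow> 'a \<Rightarrow> real" where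
  "bump x0 m z = max 0 (min 1 (real m - dist x0 z))"

lemma bump_nonneg: "0 \<le> bump x0 m z" and bump_le_1: "bump x0 m z \<le> 1"
  by (auto simp: bump_def)

lemma bump_eq_0: "real m \<le> dist x0 z \<Longrightarrow> bump x0 m z = 0"
  by (simp add: bump_def)

lemma continuous_on_bump: "continuous_on UNIV (bump x0 m)"
  unfolding bump_def by (intro continuous_intros)

lemma eventually_bump_eq_1: "eventually (\<lambda>m. bump x0 m z = 1) sequentially"
proof -
  obtain N where "dist x0 z + 1 \<le> real N" using real_arch_simple by blast
  then show ?thesis
    unfolding eventually_sequentially bump_def
    by (intro exI[of _ N] allI impI) (auto intro: order_trans)
qed

definition tail_moment :: "'a::metric_space \<Rightarrow> real \<Rightarrow> nat \<Rightarrow> 'a \<Rightarrow> real" where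
  "tail_moment x0 q m z = dpow (dist x0 z) q * (1 - bump x0 m z)"

lemma tail_moment_nonneg: "0 \<le> tail_moment x0 q m z"
  unfolding tail_moment_def by (intro mult_nonneg_nonneg dpow_nonneg) (simp add: bump_le_1)

lemma tail_moment_le: "tail_moment x0 q m z \<le> dpow (dist x0 z) q"
  unfolding tail_moment_def
  by (intro mult_left_le dpow_nonneg) (simp_all add: bump_le_1 bump_nonneg)

lemma continuous_on_tail_moment: "0 \<le> q \<Longrightarrow> continuous_on UNIV (tail_moment x0 q m)"
  unfolding tail_moment_def by (intro continuous_intros continuous_on_dpow_dist continuous_on_bump)

lemma bump_growth: "\<bar>bump a m z\<bar> \<le> 1 * (1 + dpow (dist a z) q)"
  using bump_nonneg[of a m z] bump_le_1[of a m z] dpow_nonneg[of "dist a z" q] by simp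

lemma tail_moment_growth: "\<bar>tail_moment a q m z\<bar> \<le> 1 * (1 + dpow (dist a z) q)"
  using tail_moment_nonneg[of a q m z] tail_moment_le[of a q m z] by simp

lemma Pr_integrable_bump: "\<nu> \<in> Pr q \<Longrightarrow> 0 \<le> q \<Longrightarrow> integrable \<nu> (bump a m)"
  by (rule Pr_integrable_growth[OF _ _ continuous_on_bump bump_growth])

lemma Pr_integrable_tail_moment: "\<nu> \<in> Pr q \<Longrightarrow> 0 \<le> q \<Longrightarrow> integrable \<nu> (tail_moment a q m)"
  by (rule Pr_integrable_growth[OF _ _ continuous_on_tail_moment tail_moment_growth])

lemma dpow_dist_diff_ge_cutoff:
  assumes p: "1 \<le> p" and y: "3 * real m \<le> dist y a" "1 \<le> dist y a"
  shows "dist y a * (bump a m z / 3 powr p - p * 4 powr (p - 1) * tail_moment a (p - 1) m z)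
    \<le> dpow (dist y z) p - dpow (dist a z) p"
proof -
  define D where "D = dist y a"
  have tri: "\<bar>dist y z - dist a z\<bar> \<le> D" "D - dist a z \<le> dist y z"
    using abs_dist_diff_le[of y z a] dist_triangle[of y a z] by (simp_all add: D_def dist_commute)
  have "D * (bump a m z / 3 powr p - p * 4 powr (p - 1) * tail_moment a (p - 1) m z)
    \<le> dist y z powr p - dist a z powr p"
  proof (cases "3 * dist a z \<le> D")
    case True
    have "0 \<le> p * 4 powr (p - 1) * tail_moment a (p - 1) m z"
      using p tail_moment_nonneg[of a "p - 1" m z] by simp
    moreover have "bump a m z / 3 powr p \<le> 1 / 3 powr p"
      using bump_le_1[of a m z] by (simp add: divide_right_mono)
    ultimately have "D * (bump a m z / 3 powr p - p * 4 powr (p - 1) * tail_moment a (p - 1) m z)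
      \<le> D * (1 / 3 powr p)"
      using y by (intro mult_left_mono) (auto simp: D_def)
    also have "\<dots> \<le> dist y z powr p - dist a z powr p"
      using powr_diff_ge_near[OF p _ True tri(2)] y by (simp add: D_def)
    finally show ?thesis .
  next
    case False
    then have "bump a m z = 0"
      using y by (intro bump_eq_0) (auto simp: D_def)
    then show ?thesis
      using powr_diff_ge_far[OF p _ tri(1)] False by (simp add: tail_moment_def algebra_simps)
  qed
  then show ?thesis using p by (simp add: D_def dpow_def)
qed

lemma Wp_ge_cutoff:
  assumes p: "1 \<le> p" and \<nu>: "\<nu> \<in> Pr (p - 1)" and y: "3 * real m \<le> dist y a" "1 \<le> dist y a"
  shows "dist y a * (integral\<^sup>L \<nu> (bump a m) / 3 powr p
      - p * 4 powr (p - 1) * integral\<^sup>L \<nu> (tail_moment a (p - 1) m)) \<le> Wp p \<nu> y a"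
proof -
  have q: "0 \<le> p - 1" using p by simp
  note ints = Pr_integrable_bump[OF \<nu> q] Pr_integrable_tail_moment[OF \<nu> q]
  have "dist y a * (integral\<^sup>L \<nu> (bump a m) / 3 powr p
      - p * 4 powr (p - 1) * integral\<^sup>L \<nu> (tail_moment a (p - 1) m))
    = integral\<^sup>L \<nu> (\<lambda>z. dist y a
        * (bump a m z / 3 powr p - p * 4 powr (p - 1) * tail_moment a (p - 1) m z))"
    using ints by simp
  also have "\<dots> \<le> Wp p \<nu> y a"
    unfolding Wp_def using ints
    by (intro integral_mono integrable_Wp_integrand[OF p \<nu>] dpow_dist_diff_ge_cutoff[OF p y]) auto
  finally show ?thesis .
qed

lemma conv_tw_tight:
  assumes q: "0 \<le> q" and conv: "conv_tw q \<mu>s \<mu>" and Pn: "\<And>n. \<mu>s n \<in> Pr q" and P: "\<mu> \<in> Pr q"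
    and \<delta>: "0 < \<delta>"
  obtains m N where "\<And>n. N \<le> n \<Longrightarrow> 1 / 2 < integral\<^sup>L (\<mu>s n) (bump a m)"
    and "\<And>n. N \<le> n \<Longrightarrow> integral\<^sup>L (\<mu>s n) (tail_moment a q m) < \<delta>"
proof -
  interpret prob_space \<mu> using Pr_prob_space[OF P] .
  have "(\<lambda>m. integral\<^sup>L \<mu> (bump a m)) \<longlonglongrightarrow> integral\<^sup>L \<mu> (\<lambda>z. 1)"
    by (intro integral_dominated_convergence[where w = "\<lambda>z. 1"]
        borel_prob_measurable[OF Pr_borel_prob[OF P] continuous_on_bump])
      (auto simp: abs_of_nonneg[OF bump_nonneg] bump_le_1
        intro: tendsto_eventually eventually_bump_eq_1)
  then have "eventually (\<lambda>m. 3 / 4 < integral\<^sup>L \<mu> (bump a m)) sequentially"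
    by (rule order_tendstoD) (simp add: prob_space)
  moreover have "(\<lambda>m. integral\<^sup>L \<mu> (tail_moment a q m)) \<longlonglongrightarrow> integral\<^sup>L \<mu> (\<lambda>z. 0)"
  proof (rule integral_dominated_convergence[where w = "\<lambda>z. dpow (dist a z) q"])
    have "eventually (\<lambda>m. tail_moment a q m z = 0) sequentially" for z
      using eventually_bump_eq_1[of a z] by eventually_elim (simp add: tail_moment_def)
    then show "AE z in \<mu>. (\<lambda>m. tail_moment a q m z) \<longlonglongrightarrow> 0"
      by (auto intro: tendsto_eventually)
    show "AE z in \<mu>. norm (tail_moment a q m z) \<le> dpow (dist a z) q" for m
      by (simp add: abs_of_nonneg[OF tail_moment_nonneg] tail_moment_le)
  qed (use Pr_integrable_dpow_dist[OF P q]
      borel_prob_measurable[OF Pr_borel_prob[OF P] continuous_on_tail_moment[OF q]] in auto)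
  then have "eventually (\<lambda>m. integral\<^sup>L \<mu> (tail_moment a q m) < \<delta>) sequentially"
    using \<delta> by (intro order_tendstoD) auto
  ultimately obtain m where m: "3 / 4 < integral\<^sup>L \<mu> (bump a m)"
    "integral\<^sup>L \<mu> (tail_moment a q m) < \<delta>"
    using eventually_happens'[OF sequentially_bot eventually_conj] by blast
  have "(\<lambda>n. integral\<^sup>L (\<mu>s n) (bump a m)) \<longlonglongrightarrow> integral\<^sup>L \<mu> (bump a m)"
    by (rule conv_tw_integral_tendsto[OF q conv Pn P continuous_on_bump bump_growth])
  then have bump_ev: "eventually (\<lambda>n. 1 / 2 < integral\<^sup>L (\<mu>s n) (bump a m)) sequentially"
    using m(1) by (intro order_tendstoD) auto
  have "(\<lambda>n. integral\<^sup>L (\<mu>s n) (tail_moment a q m)) \<longlonglongrightarrow> integral\<^sup>L \<mu> (tail_moment a q m)"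
    by (rule conv_tw_integral_tendsto[OF q conv Pn P continuous_on_tail_moment[OF q]
          tail_moment_growth])
  then have "eventually (\<lambda>n. integral\<^sup>L (\<mu>s n) (tail_moment a q m) < \<delta>) sequentially"
    using m(2) by (intro order_tendstoD)
  with bump_ev have "eventually (\<lambda>n. 1 / 2 < integral\<^sup>L (\<mu>s n) (bump a m) \<and>
      integral\<^sup>L (\<mu>s n) (tail_moment a q m) < \<delta>) sequentially"
    by (rule eventually_conj)
  then show thesis
    using that unfolding eventually_sequentially by blast
qed

lemma Wp_coercive:
  fixes \<mu>s :: "nat \<Rightarrow> 'a::metric_space measure"
  assumes p: "1 \<le> p" and conv: "conv_tw (p - 1) \<mu>s \<mu>"
    and Pn: "\<And>n. \<mu>s n \<in> Pr (p - 1)" and P: "\<mu> \<in> Pr (p - 1)"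
  obtains R \<kappa> N where "0 < \<kappa>"
    and "\<And>n y. N \<le> n \<Longrightarrow> R \<le> dist y a \<Longrightarrow> \<kappa> * dist y a \<le> Wp p (\<mu>s n) y a"
proof -
  define c where "c = p * 4 powr (p - 1)"
  \<comment> \<open>Small enough that the tail term costs at most a quarter of the bump term.\<close>
  define \<delta> where "\<delta> = 1 / (8 * c * 3 powr p)"
  have c: "0 < c" using p by (simp add: c_def)
  have "0 \<le> p - 1" "0 < \<delta>" using p c by (simp_all add: \<delta>_def)
  then obtain m N where mN: "\<And>n. N \<le> n \<Longrightarrow> 1 / 2 < integral\<^sup>L (\<mu>s n) (bump a m)"
    "\<And>n. N \<le> n \<Longrightarrow> integral\<^sup>L (\<mu>s n) (tail_moment a (p - 1) m) < \<delta>"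
    by (rule conv_tw_tight[OF _ conv Pn P, where a = a]) blast
  show thesis
  proof (rule that[of "3 / (8 * 3 powr p)" N "max (3 * real m) 1"])
    fix n y assume n: "N \<le> n" and y: "max (3 * real m) 1 \<le> dist y a"
    have "1 / 2 / 3 powr p \<le> integral\<^sup>L (\<mu>s n) (bump a m) / 3 powr p"
      using mN(1)[OF n] by (intro divide_right_mono) auto
    moreover have "c * integral\<^sup>L (\<mu>s n) (tail_moment a (p - 1) m) \<le> c * \<delta>"
      using mN(2)[OF n] c by (intro mult_left_mono) auto
    moreover have "c * \<delta> = 1 / (8 * 3 powr p)"
      and "3 / (8 * 3 powr p) = 1 / 2 / 3 powr p - 1 / (8 * 3 powr p)"
      using c by (simp_all add: \<delta>_def)
    ultimately have "3 / (8 * 3 powr p)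
      \<le> integral\<^sup>L (\<mu>s n) (bump a m) / 3 powr p - c * integral\<^sup>L (\<mu>s n) (tail_moment a (p - 1) m)"
      by linarith
    then have "3 / (8 * 3 powr p) * dist y a
      \<le> dist y a * (integral\<^sup>L (\<mu>s n) (bump a m) / 3 powr p
        - c * integral\<^sup>L (\<mu>s n) (tail_moment a (p - 1) m))"
      using y by (subst mult.commute) (intro mult_right_mono, auto)
    also have "\<dots> \<le> Wp p (\<mu>s n) y a"
      unfolding c_def using y by (intro Wp_ge_cutoff[OF p Pn]) auto
    finally show "3 / (8 * 3 powr p) * dist y a \<le> Wp p (\<mu>s n) y a" .
  qed simp
qed

lemma Wp_sublevel_bounded:
  fixes \<mu>s :: "nat \<Rightarrow> 'a::metric_space measure"
  assumes p: "1 \<le> p" and conv: "conv_tw (p - 1) \<mu>s \<mu>"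
    and Pn: "\<And>n. \<mu>s n \<in> Pr (p - 1)" and P: "\<mu> \<in> Pr (p - 1)"
    and W: "\<And>n. Wp p (\<mu>s n) (y n) a \<le> A"
  obtains B where "\<And>n. dist (y n) a \<le> B"
proof -
  obtain R \<kappa> N where \<kappa>: "0 < \<kappa>"
    and coercive: "\<And>n y. N \<le> n \<Longrightarrow> R \<le> dist y a \<Longrightarrow> \<kappa> * dist y a \<le> Wp p (\<mu>s n) y a"
    by (rule Wp_coercive[OF p conv Pn P, where a = a]; blast)
  have "dist (y n) a \<le> max (max R (A / \<kappa>)) (\<Sum>k<N. dist (y k) a)" for n
  proof (cases "N \<le> n \<and> R \<le> dist (y n) a")
    case True
    then have "\<kappa> * dist (y n) a \<le> A"
      using coercive[of n "y n"] W[of n] by linarith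
    then have "dist (y n) a \<le> A / \<kappa>"
      using \<kappa> by (simp add: pos_le_divide_eq mult.commute)
    then show ?thesis by (simp add: le_max_iff_disj)
  next
    case False
    moreover have "dist (y n) a \<le> (\<Sum>k<N. dist (y k) a)" if "n < N"
      using that by (intro member_le_sum) auto
    ultimately show ?thesis by (cases "n < N") auto
  qed
  then show thesis by (rule that)
qed

lemma Wp_bdd_below:
  fixes \<nu> :: "'a::metric_space measure"
  assumes p: "1 \<le> p" and P: "\<nu> \<in> Pr (p - 1)"
  shows "bdd_below (range (\<lambda>y. Wp p \<nu> y a))"
proof -
  have q: "0 \<le> p - 1" using p by simp
  have Pn: "\<And>n::nat. (\<lambda>n. \<nu>) n \<in> Pr (p - 1)" using P by simp
  obtain R \<kappa> N where \<kappa>: "0 < \<kappa>"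
    and coercive: "\<And>n y. N \<le> (n::nat) \<Longrightarrow> R \<le> dist y a \<Longrightarrow> \<kappa> * dist y a \<le> Wp p \<nu> y a"
    by (rule Wp_coercive[OF p conv_tw_const Pn P, where a = a]; blast)
  define K where "K = p * R * 2 powr (p - 1) * (1 + dpow R (p - 1))"
  define L where "L = K * integral\<^sup>L \<nu> (\<lambda>z. 1 + dpow (dist a z) (p - 1))"
  have "min 0 (- L) \<le> Wp p \<nu> y a" for y
  proof (cases "R \<le> dist y a")
    case True
    then have "\<kappa> * dist y a \<le> Wp p \<nu> y a" by (rule coercive[OF order_refl])
    moreover have "0 \<le> \<kappa> * dist y a" using \<kappa> by simp
    ultimately show ?thesis by linarith
  next
    case False
    have "\<bar>dpow (dist y z) p - dpow (dist a z) p\<bar> \<le> K * (1 + dpow (dist a z) (p - 1))" for z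
      unfolding K_def using False abs_dist_diff_le[of y z a]
      by (intro dpow_diff_le[OF p]) (auto simp: dist_commute)
    moreover have "integrable \<nu> (\<lambda>z. K * (1 + dpow (dist a z) (p - 1)))"
    proof -
      interpret prob_space \<nu> using Pr_prob_space[OF P] .
      show ?thesis using Pr_integrable_dpow_dist[OF P q] by simp
    qed
    ultimately have "Wp p \<nu> a y \<le> integral\<^sup>L \<nu> (\<lambda>z. K * (1 + dpow (dist a z) (p - 1)))"
      unfolding Wp_def
      by (intro integral_mono integrable_Wp_integrand[OF p P]) (auto simp: abs_le_iff)
    also have "\<dots> = L" by (simp add: L_def)
    finally show ?thesis using Wp_swap[OF p P, of a y] by linarith
  qed
  then show ?thesis by (rule bdd_belowI2)
qed

section \<open>The sets \<open>M\<^sub>p\<close>\<close>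

lemma Mp_subseq_tendsto:
  fixes \<mu>s :: "nat \<Rightarrow> 'a::metric_space measure"
    and c :: "(nat \<Rightarrow> 'a) \<Rightarrow> 'a \<Rightarrow> bool"
  assumes p: "1 \<le> p" and wc: "weak_conv c" and conv: "conv_tw (p - 1) \<mu>s \<mu>"
    and Pn: "\<And>n. \<mu>s n \<in> Pr (p - 1)" and P: "\<mu> \<in> Pr (p - 1)"
    and y: "\<And>n. y n \<in> Mp p (\<mu>s n)"
  obtains r x where "strict_mono r" "x \<in> Mp p \<mu>" "(y \<circ> r) \<longlonglongrightarrow> x"
proof -
  have W: "Wp p (\<mu>s n) (y n) x' \<le> 0" for n x' using y by (simp add: Mp_def)
  obtain B where B: "\<And>n. dist (y n) (y 0) \<le> B"
    by (rule Wp_sublevel_bounded[where y = y and a = "y 0", OF p conv Pn P W]; blast)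
  obtain r x where r: "strict_mono r" and cyr: "c (y \<circ> r) x"
    using weak_conv_bounded_subseq[where s = y, OF wc B] by blast
  have conv': "conv_tw (p - 1) (\<mu>s \<circ> r) \<mu>" by (rule conv_tw_subseq[OF conv r])
  have Pn': "(\<mu>s \<circ> r) n \<in> Pr (p - 1)" for n using Pn by simp
  have yb: "dist ((y \<circ> r) n) x' \<le> B + dist (y 0) x'" for n x'
    using B[of "r n"] dist_triangle[of "y (r n)" x' "y 0"] by simp
  have W': "Wp p ((\<mu>s \<circ> r) n) ((y \<circ> r) n) x' \<le> 0" for n x' using W by simp
  have "Wp p \<mu> x x' \<le> 0" for x'
    by (rule Wp_weak_limit_le[OF p conv' Pn' P wc cyr yb W' tendsto_const])
  then have x: "x \<in> Mp p \<mu>" by (simp add: Mp_def)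
  obtain r' where r': "strict_mono r'" and lim: "(y \<circ> r \<circ> r') \<longlonglongrightarrow> x"
    using weak_limit_strong_subseq_if_Wp_le[OF p conv' Pn' P wc cyr yb W'] by blast
  show thesis
    by (rule that[OF strict_mono_o[OF r r'] x lim[unfolded comp_assoc]])
qed

lemma Mp_nonempty:
  fixes \<nu> :: "'a::metric_space measure"
    and c :: "(nat \<Rightarrow> 'a) \<Rightarrow> 'a \<Rightarrow> bool"
  assumes p: "1 \<le> p" and wc: "weak_conv c" and P: "\<nu> \<in> Pr (p - 1)"
  shows "Mp p \<nu> \<noteq> {}"
proof -
  fix x0 :: 'a
  have Pn: "\<And>n::nat. (\<lambda>n. \<nu>) n \<in> Pr (p - 1)" using P by simp
  define F where "F y = Wp p \<nu> y x0" for y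
  define S where "S = Inf (range F)"
  have bdd: "bdd_below (range F)"
    unfolding F_def by (rule Wp_bdd_below[OF p P])
  have "\<exists>y. F y < S + inverse (real (Suc n))" for n
    using cInf_less_iff[OF _ bdd, of "S + inverse (real (Suc n))"] by (auto simp: S_def)
  then obtain y where y: "\<And>n. F (y n) < S + inverse (real (Suc n))"
    by metis
  define a where "a n = S + inverse (real (Suc n))" for n
  have a: "a \<longlonglongrightarrow> S"
    unfolding a_def using tendsto_add[OF tendsto_const LIMSEQ_inverse_real_of_nat, of S] by simp
  have W: "Wp p ((\<lambda>n. \<nu>) n) (y n) x0 \<le> S + 1" for n
    using y[of n] inverse_le_1_iff[of "real (Suc n)"] by (simp add: F_def)
  obtain B where B: "\<And>n. dist (y n) x0 \<le> B"
    by (rule Wp_sublevel_bounded[where y = y, OF p conv_tw_const Pn P W]; blast)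
  obtain r x where r: "strict_mono r" and cyr: "c (y \<circ> r) x"
    using weak_conv_bounded_subseq[where s = y, OF wc B] by blast
  have Wr: "Wp p ((\<lambda>n. \<nu>) n) ((y \<circ> r) n) x0 \<le> (a \<circ> r) n" for n
    using y[of "r n"] by (simp add: F_def a_def)
  have yr: "dist ((y \<circ> r) n) x0 \<le> B" for n
    using B by simp
  have Fx: "F x \<le> S"
    unfolding F_def
    by (rule Wp_weak_limit_le[OF p conv_tw_const Pn P wc cyr yr Wr LIMSEQ_subseq_LIMSEQ[OF a r]])
  have S_le: "S \<le> F x'" for x'
    unfolding S_def by (rule cInf_lower[OF _ bdd]) simp
  have "Wp p \<nu> x x' \<le> 0" for x'
    using Wp_diff[OF p P, of x x' x0] Fx S_le[of x'] by (simp add: F_def)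
  then show ?thesis by (auto simp: Mp_def)
qed

lemma compact_Mp:
  fixes \<nu> :: "'a::metric_space measure"
    and c :: "(nat \<Rightarrow> 'a) \<Rightarrow> 'a \<Rightarrow> bool"
  assumes p: "1 \<le> p" and wc: "weak_conv c" and P: "\<nu> \<in> Pr (p - 1)"
  shows "compact (Mp p \<nu>)"
  unfolding compact_eq_seq_compact_metric
proof (rule seq_compactI)
  fix f :: "nat \<Rightarrow> 'a" assume "\<forall>n. f n \<in> Mp p \<nu>"
  then obtain r x where "strict_mono r" "x \<in> Mp p \<nu>" "(f \<circ> r) \<longlonglongrightarrow> x"
    using Mp_subseq_tendsto[OF p wc conv_tw_const _ P, of f] P by blast
  then show "\<exists>x\<in>Mp p \<nu>. \<exists>r. strict_mono r \<and> (f \<circ> r) \<longlonglongrightarrow> x" by blast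
qed

lemma Mp_attains_sup_infdist:
  fixes \<nu> :: "'a::metric_space measure"
    and c :: "(nat \<Rightarrow> 'a) \<Rightarrow> 'a \<Rightarrow> bool"
  assumes p: "1 \<le> p" and wc: "weak_conv c" and P: "\<nu> \<in> Pr (p - 1)"
  shows "\<exists>z\<in>Mp p \<nu>. \<forall>y\<in>Mp p \<nu>. infdist y K \<le> infdist z K"
  by (rule continuous_attains_sup[OF compact_Mp[OF p wc P] Mp_nonempty[OF p wc P]
        continuous_on_infdist[OF continuous_on_id]])

lemma LIMSEQ_subseq_criterion:
  fixes X :: "nat \<Rightarrow> 'a::metric_space"
  assumes "\<And>r :: nat \<Rightarrow> nat. strict_mono r \<Longrightarrow> \<exists>r'. strict_mono r' \<and> (X \<circ> r \<circ> r') \<longlonglongrightarrow> L"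
  shows "X \<longlonglongrightarrow> L"
proof (rule ccontr)
  assume "\<not> X \<longlonglongrightarrow> L"
  then obtain e where e: "0 < e" and "\<forall>N. \<exists>n\<ge>N. e \<le> dist (X n) L"
    unfolding LIMSEQ_def by (auto simp: not_less)
  then have "infinite {n. e \<le> dist (X n) L}"
    by (simp add: infinite_nat_iff_unbounded_le)
  then obtain r :: "nat \<Rightarrow> nat" where r: "strict_mono r" and far: "\<And>n. e \<le> dist (X (r n)) L"
    using infinite_enumerate by blast
  obtain r' where "(X \<circ> r \<circ> r') \<longlonglongrightarrow> L"
    using assms[OF r] by blast
  then obtain n where "dist (X (r (r' n))) L < e"
    using e unfolding LIMSEQ_def by fastforce
  with far show False by (meson not_le)
qed

lemma Mp_excess_tendsto_zero:
  fixes \<mu>s :: "nat \<Rightarrow> 'a::metric_space measure"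
    and c :: "(nat \<Rightarrow> 'a) \<Rightarrow> 'a \<Rightarrow> bool"
  assumes p: "1 \<le> p" and wc: "weak_conv c" and conv: "conv_tw (p - 1) \<mu>s \<mu>"
    and Pn: "\<And>n. \<mu>s n \<in> Pr (p - 1)" and P: "\<mu> \<in> Pr (p - 1)"
  shows "(\<lambda>n. SUP y\<in>Mp p (\<mu>s n). infdist y (Mp p \<mu>)) \<longlonglongrightarrow> 0"
proof -
  obtain z where z: "\<And>n. z n \<in> Mp p (\<mu>s n)"
    and z_max: "\<And>n y. y \<in> Mp p (\<mu>s n) \<Longrightarrow> infdist y (Mp p \<mu>) \<le> infdist (z n) (Mp p \<mu>)"
    using Mp_attains_sup_infdist[OF p wc Pn, of _ "Mp p \<mu>"] by metis
  have SUP_eq: "(SUP y\<in>Mp p (\<mu>s n). infdist y (Mp p \<mu>)) = infdist (z n) (Mp p \<mu>)" for n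
    using z z_max by (intro cSup_eq_maximum) auto
  have "(\<lambda>n. infdist (z n) (Mp p \<mu>)) \<longlonglongrightarrow> 0"
  proof (rule LIMSEQ_subseq_criterion)
    fix r :: "nat \<Rightarrow> nat" assume r: "strict_mono r"
    have Pn': "(\<mu>s \<circ> r) n \<in> Pr (p - 1)" and z': "(z \<circ> r) n \<in> Mp p ((\<mu>s \<circ> r) n)" for n
      using Pn z by simp_all
    obtain r' x where r': "strict_mono r'" and x: "x \<in> Mp p \<mu>" and lim: "(z \<circ> r \<circ> r') \<longlonglongrightarrow> x"
      by (rule Mp_subseq_tendsto[OF p wc conv_tw_subseq[OF conv r] Pn' P z'])
    have "(\<lambda>n. infdist ((z \<circ> r \<circ> r') n) (Mp p \<mu>)) \<longlonglongrightarrow> infdist x (Mp p \<mu>)"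
      by (rule tendsto_infdist[OF lim])
    then have "((\<lambda>n. infdist (z n) (Mp p \<mu>)) \<circ> r \<circ> r') \<longlonglongrightarrow> 0"
      using x by (simp add: comp_def)
    with r' show "\<exists>r'. strict_mono r' \<and> ((\<lambda>n. infdist (z n) (Mp p \<mu>)) \<circ> r \<circ> r') \<longlonglongrightarrow> 0"
      by blast
  qed
  then show ?thesis
    unfolding SUP_eq .
qed

theorem corollary3p11:
  fixes \<mu>s :: "nat \<Rightarrow> 'a::metric_space measure" and \<mu> :: "'a measure" and p :: real
  assumes "separable_metric TYPE('a)"
    and "admits_weak_convergence TYPE('a)"
    and "p \<ge> 1"
    and "\<forall>n. \<mu>s n \<in> Pr (p - 1)" and "\<mu> \<in> Pr (p - 1)"
    and "conv_tw (p - 1) \<mu>s \<mu>"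
  shows "(\<forall>n. (\<forall>y\<in>Mp p (\<mu>s n). \<exists>x\<in>Mp p \<mu>. \<forall>x'\<in>Mp p \<mu>. dist y x \<le> dist y x') \<and>
              (\<exists>z\<in>Mp p (\<mu>s n). \<forall>y\<in>Mp p (\<mu>s n).
                 (INF x\<in>Mp p \<mu>. dist y x) \<le> (INF x\<in>Mp p \<mu>. dist z x)))
         \<and> (\<lambda>n. SUP y\<in>Mp p (\<mu>s n). INF x\<in>Mp p \<mu>. dist y x) \<longlonglongrightarrow> 0"
proof -
  obtain c :: "(nat \<Rightarrow> 'a) \<Rightarrow> 'a \<Rightarrow> bool" where wc: "weak_conv c"
    using assms(2) by (auto simp: admits_weak_convergence_def)
  have p: "1 \<le> p" and Pn: "\<And>n. \<mu>s n \<in> Pr (p - 1)" using assms(3,4) by auto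
  note P = assms(5) and conv = assms(6)
  have INF_eq: "(INF x\<in>Mp p \<mu>. dist y x) = infdist y (Mp p \<mu>)" for y
    using Mp_nonempty[OF p wc P] by (simp add: infdist_def)
  have nearest: "\<exists>x\<in>Mp p \<mu>. \<forall>x'\<in>Mp p \<mu>. dist y x \<le> dist y x'" for y
    by (rule continuous_attains_inf[OF compact_Mp[OF p wc P] Mp_nonempty[OF p wc P]
          continuous_on_dist[OF continuous_on_const continuous_on_id]])
  have "\<forall>n. (\<forall>y\<in>Mp p (\<mu>s n). \<exists>x\<in>Mp p \<mu>. \<forall>x'\<in>Mp p \<mu>. dist y x \<le> dist y x') \<and>
      (\<exists>z\<in>Mp p (\<mu>s n). \<forall>y\<in>Mp p (\<mu>s n). infdist y (Mp p \<mu>) \<le> infdist z (Mp p \<mu>))"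
    using nearest Mp_attains_sup_infdist[OF p wc Pn, of _ "Mp p \<mu>"] by blast
  then show ?thesis
    unfolding INF_eq using Mp_excess_tendsto_zero[OF p wc conv Pn P] by (rule conjI)
qed

end
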